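(* Let $n\ge 3$ and let $M_n$ be the lattice consisting of $0$, $1$ and $n$ pairwise incomparable elements $a_1,\dots,a_n$ (with $0<a_i<1$ for all $i$). For each $i$ and any two distinct indices $j,k$ different from $i$, one has $\chi_{a_i}(x)=\big((x\wedge a_i)\vee a_j\big)\wedge\big((x\wedge a_i)\vee a_k\big)$ for all $x\in M_n$. Consequently $\mathsf{C}(M_n)=\mathsf{Pol}_{0,1}(M_n)$.
   Context: For $a\in L$, $\chi_a:L\to L$ is defined by $\chi_a(x)=1$ if $x\ge a$ and $x\ne0$, and $\chi_a(x)=0$ otherwise. An $n$-ary aggregation function on a bounded lattice $L$ ($n\ge1$) is a nondecreasing map $A:L^n\to L$ with $A(0,\dots,0)=0$, $A(1,\dots,1)=1$; $\mathsf{C}(L)$ is the set of all of them. Polynomials on $L$ are functions $L^n\to L$ built from projections and constants by finitely many pointwise joins and meets; $\mathsf{Pol}_{0,1}(L)$ is the set of polynomials preserving $0$ and $1$. *)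

theory Defs
  imports Main
begin

text \<open>The lattice M_n: elements 0 (Bot), 1 (Top) and atoms a_1..a_n (At 1 .. At n).
  The meet/join below are defined on the whole datatype; the carrier of M_n is mn_carrier n.\<close>

datatype mn = Bot | Top | At nat

fun mmeet :: "mn \<Rightarrow> mn \<Rightarrow> mn" where
  "mmeet Bot y = Bot"
| "mmeet x Bot = Bot"
| "mmeet Top y = y"
| "mmeet x Top = x"
| "mmeet (At i) (At j) = (if i = j then At i else Bot)"

fun mjoin :: "mn \<Rightarrow> mn \<Rightarrow> mn" where
  "mjoin Top y = Top"
| "mjoin x Top = Top"
| "mjoin Bot y = y"
| "mjoin x Bot = x"
| "mjoin (At i) (At j) = (if i = j then At i else Top)"

definition mleq :: "mn \<Rightarrow> mn \<Rightarrow> bool" where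
  "mleq x y \<longleftrightarrow> mmeet x y = x"

definition mn_carrier :: "nat \<Rightarrow> mn set" where
  "mn_carrier n = {Bot, Top} \<union> {At i | i. 1 \<le> i \<and> i \<le> n}"

definition chi :: "mn \<Rightarrow> mn \<Rightarrow> mn" where
  "chi a x = (if mleq a x \<and> x \<noteq> Bot then Top else Bot)"

definition tuples :: "nat \<Rightarrow> nat \<Rightarrow> mn list set" where
  "tuples n k = {xs. length xs = k \<and> set xs \<subseteq> mn_carrier n}"

definition tleq :: "mn list \<Rightarrow> mn list \<Rightarrow> bool" where
  "tleq xs ys \<longleftrightarrow> length xs = length ys \<and> (\<forall>i < length xs. mleq (xs ! i) (ys ! i))"

text \<open>k-ary aggregation functions on M_n (the set C(M_n) restricted to arity k).\<close>
definition aggregation :: "nat \<Rightarrow> nat \<Rightarrow> (mn list \<Rightarrow> mn) \<Rightarrow> bool" where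
  "aggregation n k f \<longleftrightarrow>
     (\<forall>xs \<in> tuples n k. f xs \<in> mn_carrier n)
   \<and> (\<forall>xs \<in> tuples n k. \<forall>ys \<in> tuples n k. tleq xs ys \<longrightarrow> mleq (f xs) (f ys))
   \<and> f (replicate k Bot) = Bot \<and> f (replicate k Top) = Top"

inductive_set pol :: "nat \<Rightarrow> nat \<Rightarrow> (mn list \<Rightarrow> mn) set" for n k where
  proj: "i < k \<Longrightarrow> (\<lambda>xs. xs ! i) \<in> pol n k"
| const: "c \<in> mn_carrier n \<Longrightarrow> (\<lambda>xs. c) \<in> pol n k"
| join: "p \<in> pol n k \<Longrightarrow> q \<in> pol n k \<Longrightarrow> (\<lambda>xs. mjoin (p xs) (q xs)) \<in> pol n k"
| meet: "p \<in> pol n k \<Longrightarrow> q \<in> pol n k \<Longrightarrow> (\<lambda>xs. mmeet (p xs) (q xs)) \<in> pol n k"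

definition pol01 :: "nat \<Rightarrow> nat \<Rightarrow> (mn list \<Rightarrow> mn) \<Rightarrow> bool" where
  "pol01 n k f \<longleftrightarrow>
     (\<exists>p \<in> pol n k. \<forall>xs \<in> tuples n k. f xs = p xs)
   \<and> f (replicate k Bot) = Bot \<and> f (replicate k Top) = Top"

end

theory Submission
  imports Defs
begin

text \<open>The identity for \<open>chi (At i)\<close> holds because \<open>x \<sqinter> a\<^sub>i\<close> is either \<open>0\<close> or \<open>a\<^sub>i\<close>, and
  \<open>(0 \<squnion> a\<^sub>j) \<sqinter> (0 \<squnion> a\<^sub>k) = 0\<close> while \<open>(a\<^sub>i \<squnion> a\<^sub>j) \<sqinter> (a\<^sub>i \<squnion> a\<^sub>k) = 1\<close>; with \<open>chi Top = chi a\<^sub>1 \<sqinter> chi a\<^sub>2\<close>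
  every indicator of a principal filter \<open>\<up>b\<close> is therefore a polynomial. A monotone \<open>f\<close> on
  the finite lattice \<open>M\<^sub>n\<^sup>m\<close> is the join over all tuples \<open>a\<close> of \<open>f a \<sqinter> \<Sqinter>\<^sub>l [x\<^sub>l \<ge> a\<^sub>l]\<close>, hence a
  polynomial; conversely polynomials are monotone, so aggregation functions are exactly the
  polynomials preserving \<open>0\<close> and \<open>1\<close>.\<close>

lemma mleq_refl [simp]: "mleq x x"
  by (cases x) (auto simp: mleq_def)

lemma mleq_antisym: "mleq x y \<Longrightarrow> mleq y x \<Longrightarrow> x = y"
  by (cases x; cases y) (auto simp: mleq_def split: if_splits)

lemma mleq_trans: "mleq x y \<Longrightarrow> mleq y z \<Longrightarrow> mleq x z"
  by (cases x; cases y; cases z) (auto simp: mleq_def split: if_splits)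

lemma mleq_Bot [simp]: "mleq Bot x"
  by (cases x) (auto simp: mleq_def)

lemma mjoin_least: "mleq x u \<Longrightarrow> mleq y u \<Longrightarrow> mleq (mjoin x y) u"
  by (cases x; cases y; cases u) (auto simp: mleq_def split: if_splits)

lemma mjoin_upper1: "mleq x (mjoin x y)"
  by (cases x; cases y) (auto simp: mleq_def)

lemma mjoin_upper2: "mleq y (mjoin x y)"
  by (cases x; cases y) (auto simp: mleq_def)

lemma mjoin_mono: "mleq a b \<Longrightarrow> mleq c d \<Longrightarrow> mleq (mjoin a c) (mjoin b d)"
  by (cases a; cases b; cases c; cases d) (auto simp: mleq_def split: if_splits)

lemma mmeet_mono: "mleq a b \<Longrightarrow> mleq c d \<Longrightarrow> mleq (mmeet a c) (mmeet b d)"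
  by (cases a; cases b; cases c; cases d) (auto simp: mleq_def split: if_splits)

lemma mmeet_Top [simp]: "mmeet x Top = x"
  by (cases x) auto

lemma mmeet_Bot [simp]: "mmeet x Bot = Bot"
  by (cases x) auto

lemma tleq_refl [simp]: "tleq xs xs"
  by (simp add: tleq_def)

definition mJoin :: "mn list \<Rightarrow> mn" where
  "mJoin xs = foldr mjoin xs Bot"

definition mMeet :: "mn list \<Rightarrow> mn" where
  "mMeet xs = foldr mmeet xs Top"

lemma mJoin_least: "(\<And>x. x \<in> set xs \<Longrightarrow> mleq x u) \<Longrightarrow> mleq (mJoin xs) u"
  unfolding mJoin_def by (induction xs) (auto intro: mjoin_least)

lemma mJoin_upper: "x \<in> set xs \<Longrightarrow> mleq x (mJoin xs)"
  unfolding mJoin_def by (induction xs) (auto intro: mjoin_upper1 mleq_trans[OF _ mjoin_upper2])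

lemma mJoin_eq_greatest:
  assumes "\<And>x. x \<in> set xs \<Longrightarrow> mleq x u" and "u \<in> set xs"
  shows "mJoin xs = u"
  using mJoin_least[OF assms(1)] mJoin_upper[OF assms(2)] by (rule mleq_antisym)

lemma mMeet_Top_Bot:
  assumes "set xs \<subseteq> {Top, Bot}"
  shows "mMeet xs = (if Bot \<in> set xs then Bot else Top)"
  using assms unfolding mMeet_def by (induction xs) auto

lemma Bot_in_carrier [simp]: "Bot \<in> mn_carrier n"
  and Top_in_carrier [simp]: "Top \<in> mn_carrier n"
  by (auto simp: mn_carrier_def)

lemma At_in_carrier_iff [simp]: "At i \<in> mn_carrier n \<longleftrightarrow> 1 \<le> i \<and> i \<le> n"
  by (auto simp: mn_carrier_def)

lemma mjoin_in_carrier: "x \<in> mn_carrier n \<Longrightarrow> y \<in> mn_carrier n \<Longrightarrow> mjoin x y \<in> mn_carrier n"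
  by (cases x; cases y) simp_all

lemma mmeet_in_carrier: "x \<in> mn_carrier n \<Longrightarrow> y \<in> mn_carrier n \<Longrightarrow> mmeet x y \<in> mn_carrier n"
  by (cases x; cases y) simp_all

lemma finite_mn_carrier: "finite (mn_carrier n)"
proof -
  have "{At i |i. 1 \<le> i \<and> i \<le> n} = At ` {1..n}" by auto
  then show ?thesis unfolding mn_carrier_def by simp
qed

lemma finite_tuples: "finite (tuples n m)"
proof -
  have "tuples n m = {xs. set xs \<subseteq> mn_carrier n \<and> length xs = m}"
    unfolding tuples_def by auto
  then show ?thesis using finite_lists_length_eq[OF finite_mn_carrier] by simp
qed

definition pol_fun :: "nat \<Rightarrow> nat \<Rightarrow> (mn list \<Rightarrow> mn) \<Rightarrow> bool" where
  "pol_fun n m f \<longleftrightarrow> (\<exists>p \<in> pol n m. \<forall>xs \<in> tuples n m. f xs = p xs)"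

lemma pol_fun_proj: "l < m \<Longrightarrow> pol_fun n m (\<lambda>xs. xs ! l)"
  unfolding pol_fun_def by (intro bexI[OF _ pol.proj]) auto

lemma pol_fun_const: "c \<in> mn_carrier n \<Longrightarrow> pol_fun n m (\<lambda>xs. c)"
  unfolding pol_fun_def by (intro bexI[OF _ pol.const]) auto

lemma pol_fun_join:
  assumes "pol_fun n m f" "pol_fun n m g"
  shows "pol_fun n m (\<lambda>xs. mjoin (f xs) (g xs))"
proof -
  from assms obtain p q where "p \<in> pol n m" "q \<in> pol n m"
    and "\<forall>xs \<in> tuples n m. f xs = p xs" "\<forall>xs \<in> tuples n m. g xs = q xs"
    unfolding pol_fun_def by blast
  then show ?thesis unfolding pol_fun_def by (intro bexI[OF _ pol.join[of p n m q]]) auto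
qed

lemma pol_fun_meet:
  assumes "pol_fun n m f" "pol_fun n m g"
  shows "pol_fun n m (\<lambda>xs. mmeet (f xs) (g xs))"
proof -
  from assms obtain p q where "p \<in> pol n m" "q \<in> pol n m"
    and "\<forall>xs \<in> tuples n m. f xs = p xs" "\<forall>xs \<in> tuples n m. g xs = q xs"
    unfolding pol_fun_def by blast
  then show ?thesis unfolding pol_fun_def by (intro bexI[OF _ pol.meet[of p n m q]]) auto
qed

lemma pol_fun_cong:
  "pol_fun n m f \<Longrightarrow> (\<And>xs. xs \<in> tuples n m \<Longrightarrow> f xs = g xs) \<Longrightarrow> pol_fun n m g"
  unfolding pol_fun_def by auto

lemma pol_fun_mJoin:
  "(\<And>a. a \<in> set as \<Longrightarrow> pol_fun n m (F a)) \<Longrightarrow> pol_fun n m (\<lambda>xs. mJoin (map (\<lambda>a. F a xs) as))"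
  unfolding mJoin_def by (induction as) (auto intro: pol_fun_const pol_fun_join)

lemma pol_fun_mMeet:
  "(\<And>a. a \<in> set as \<Longrightarrow> pol_fun n m (F a)) \<Longrightarrow> pol_fun n m (\<lambda>xs. mMeet (map (\<lambda>a. F a xs) as))"
  unfolding mMeet_def by (induction as) (auto intro: pol_fun_const pol_fun_meet)

lemma pol_in_carrier_mono:
  assumes "p \<in> pol n m"
  shows "\<forall>xs \<in> tuples n m. p xs \<in> mn_carrier n"
    and "\<forall>xs \<in> tuples n m. \<forall>ys \<in> tuples n m. tleq xs ys \<longrightarrow> mleq (p xs) (p ys)"
  using assms
  by (induction rule: pol.induct)
     (auto simp: tuples_def tleq_def mjoin_in_carrier mmeet_in_carrier mjoin_mono mmeet_mono)

lemma pol01_imp_aggregation: "pol01 n m f \<Longrightarrow> aggregation n m f"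
  unfolding pol01_def aggregation_def using pol_in_carrier_mono by metis

lemma chi_At_eq:
  assumes "j \<noteq> i" "k \<noteq> i" "j \<noteq> k"
  shows "chi (At i) x = mmeet (mjoin (mmeet x (At i)) (At j)) (mjoin (mmeet x (At i)) (At k))"
  using assms by (cases x) (auto simp: chi_def mleq_def)

lemma chi_Top_eq: "chi Top x = mmeet (chi (At i) x) (chi (At j) x)" if "i \<noteq> j"
  using that by (cases x) (auto simp: chi_def mleq_def)

definition above :: "mn \<Rightarrow> mn \<Rightarrow> mn" where
  "above b x = (if mleq b x then Top else Bot)"

lemma above_eq_chi: "b \<noteq> Bot \<Longrightarrow> above b x = chi b x"
  by (cases b; cases x) (auto simp: above_def chi_def mleq_def)

lemma pol_fun_chi_At:
  assumes "n \<ge> 3" "1 \<le> i" "i \<le> n" "l < m"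
  shows "pol_fun n m (\<lambda>xs. chi (At i) (xs ! l))"
proof -
  define j :: nat where "j = (if i = 1 then 2 else 1)"
  define k :: nat where "k = (if i = 3 then 2 else 3)"
  have "j \<noteq> i" "k \<noteq> i" "j \<noteq> k" "At j \<in> mn_carrier n" "At k \<in> mn_carrier n"
    using assms(1) unfolding j_def k_def by auto
  then show ?thesis
    using assms
    by (subst chi_At_eq[of j i k])
       (auto intro!: pol_fun_meet pol_fun_join pol_fun_proj pol_fun_const)
qed

lemma pol_fun_above:
  assumes "n \<ge> 3" "b \<in> mn_carrier n" "l < m"
  shows "pol_fun n m (\<lambda>xs. above b (xs ! l))"
proof (cases b)
  case Bot
  then show ?thesis by (simp add: above_def pol_fun_const)
next
  case Top
  then show ?thesis
    using assms pol_fun_chi_At[of n 1 l m] pol_fun_chi_At[of n 2 l m]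
    by (simp add: above_eq_chi chi_Top_eq[of 1 2] pol_fun_meet)
next
  case (At i)
  then show ?thesis using assms by (simp add: above_eq_chi pol_fun_chi_At)
qed

definition minterm :: "mn list \<Rightarrow> mn list \<Rightarrow> mn" where
  "minterm a xs = mMeet (map (\<lambda>l. above (a ! l) (xs ! l)) [0..<length a])"

lemma minterm_eq: "length xs = length a \<Longrightarrow> minterm a xs = (if tleq a xs then Top else Bot)"
  unfolding minterm_def tleq_def by (subst mMeet_Top_Bot) (auto simp: above_def split: if_splits)

lemma pol_fun_minterm: "n \<ge> 3 \<Longrightarrow> a \<in> tuples n m \<Longrightarrow> pol_fun n m (minterm a)"
  unfolding minterm_def
  by (intro pol_fun_mMeet pol_fun_above) (auto simp: tuples_def)

lemma monotone_eq_mJoin_minterms: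
  assumes mono: "\<And>a b. a \<in> tuples n m \<Longrightarrow> b \<in> tuples n m \<Longrightarrow> tleq a b \<Longrightarrow> mleq (f a) (f b)"
    and as: "set as = tuples n m" and xs: "xs \<in> tuples n m"
  shows "f xs = mJoin (map (\<lambda>a. mmeet (f a) (minterm a xs)) as)"
proof (rule sym, rule mJoin_eq_greatest)
  fix y assume "y \<in> set (map (\<lambda>a. mmeet (f a) (minterm a xs)) as)"
  then obtain a where a: "a \<in> tuples n m" and y: "y = mmeet (f a) (minterm a xs)"
    using as by auto
  have "length xs = length a" using a xs by (simp add: tuples_def)
  then show "mleq y (f xs)"
    using mono[OF a xs] by (simp add: y minterm_eq)
next
  show "f xs \<in> set (map (\<lambda>a. mmeet (f a) (minterm a xs)) as)"
    using as xs by (auto simp: minterm_eq intro!: image_eqI[of _ _ xs])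
qed

lemma aggregation_imp_pol01:
  assumes "n \<ge> 3" and agg: "aggregation n m f"
  shows "pol01 n m f"
proof -
  obtain as where as: "set as = tuples n m"
    using finite_list[OF finite_tuples] by blast
  have "f a \<in> mn_carrier n" if "a \<in> tuples n m" for a
    using agg that by (simp add: aggregation_def)
  then have "pol_fun n m (\<lambda>xs. mJoin (map (\<lambda>a. mmeet (f a) (minterm a xs)) as))"
    using assms(1) as by (intro pol_fun_mJoin pol_fun_meet pol_fun_const pol_fun_minterm) auto
  moreover have "\<And>xs. xs \<in> tuples n m \<Longrightarrow> mJoin (map (\<lambda>a. mmeet (f a) (minterm a xs)) as) = f xs"
    using monotone_eq_mJoin_minterms[OF _ as] agg by (simp add: aggregation_def)
  ultimately have "pol_fun n m f" by (rule pol_fun_cong)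
  then show ?thesis using agg by (simp add: pol01_def pol_fun_def aggregation_def)
qed

theorem mainTheorem9:
  fixes n :: nat
  assumes "n \<ge> 3"
  shows "(\<forall>i j k x. i \<in> {1..n} \<and> j \<in> {1..n} \<and> k \<in> {1..n} \<and> j \<noteq> i \<and> k \<noteq> i \<and> j \<noteq> k
            \<and> x \<in> mn_carrier n \<longrightarrow>
            chi (At i) x = mmeet (mjoin (mmeet x (At i)) (At j)) (mjoin (mmeet x (At i)) (At k)))
       \<and> (\<forall>m \<ge> 1. \<forall>f. aggregation n m f \<longleftrightarrow> pol01 n m f)"
  using chi_At_eq aggregation_imp_pol01[OF assms] pol01_imp_aggregation by blast

end
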